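(* For the intercept model, with $\hat{B} = G_{21}G_{11}^{-1}$ and $\hat{\alpha} = (-\hat{B}, I_r)\bar{\mathbf{x}}$, the ordinary least squares estimator of the matrix of mean vectors $$ \hat{U}_1(\hat{\alpha},\hat{B}) = \left(I_p + \hat{B}'\hat{B}\right)^{-1}\left(I_p, \hat{B}'\right)\left(X - \begin{pmatrix}\mathbf{0}\\ \hat{\alpha}\mathbf{1}_n'\end{pmatrix}\right) $$ equals $$ \hat{U}_1(\hat{\alpha},\hat{B}) = n^{-1} X_1\mathbf{1}_n\mathbf{1}_n' + \left(G_{11}G_{11}'X_1 + G_{11}G_{21}'X_2\right)C_n, $$ and in particular differs from the expression $\left(G_{11}G_{11}'X_1 + G_{11}G_{21}'X_2\right)C_n$ by the additional term $n^{-1}X_1\mathbf{1}_n\mathbf{1}_n'$.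
   Context: Multivariate errors-in-variables model: observed $X = (X_1', X_2')'$ where $X_1$ is $p\times n$ and $X_2$ is $r\times n$ (columns $\mathbf{x}_{1i}$, $\mathbf{x}_{2i}$, $i=1,\dots,n$), with $X = U + E$, $U = (U_1', U_2')'$, $U_2 = \alpha\mathbf{1}_n' + BU_1$, where $U_1$ ($p\times n$) is the matrix of unknown mean vectors, $B$ is $r\times p$, $\alpha$ is an $r$-vector, $\mathbf{1}_n$ is the $n$-vector of ones, and the columns of $E$ are i.i.d. with mean $\mathbf{0}$ and covariance $\sigma^2 I_{p+r}$. In the intercept model ($\alpha$ unknown), $C_n = I_n - n^{-1}\mathbf{1}_n\mathbf{1}_n'$. Let $W = XC_nX'$ with eigen-decomposition $W = GDG'$, $D$ diagonal with ordered eigenvalues and $G$ a $(p+r)\times(p+r)$ orthogonal matrix partitioned as $G = \begin{pmatrix} G_{11} & G_{12}\\ G_{21} & G_{22}\end{pmatrix}$ with $G_{11}$ of size $p\times p$ (assumed invertible). Let $\bar{\mathbf{x}} = n^{-1}X\mathbf{1}_n$. *)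

theory Defs
  imports "Jordan_Normal_Form.Matrix"
begin

text \<open>Inverse of a square matrix (meaningful when the matrix is invertible).\<close>
definition inv_mat :: "real mat \<Rightarrow> real mat" where
  "inv_mat A = (THE B. B \<in> carrier_mat (dim_row A) (dim_row A) \<and>
      A * B = 1\<^sub>m (dim_row A) \<and> B * A = 1\<^sub>m (dim_row A))"

text \<open>Horizontal concatenation (A, B) of two matrices with the same number of rows.\<close>
definition append_cols_mat :: "real mat \<Rightarrow> real mat \<Rightarrow> real mat" where
  "append_cols_mat A B = four_block_mat A B (0\<^sub>m 0 (dim_col A)) (0\<^sub>m 0 (dim_col B))"

definition ones_col :: "nat \<Rightarrow> real mat" where
  "ones_col n = mat n 1 (\<lambda>_. 1)"

definition ones_row :: "nat \<Rightarrow> real mat" where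
  "ones_row n = mat 1 n (\<lambda>_. 1)"

definition centering_mat :: "nat \<Rightarrow> real mat" where
  "centering_mat n = 1\<^sub>m n - (1 / real n) \<cdot>\<^sub>m (ones_col n * ones_row n)"

end

theory Submission
  imports Defs "Jordan_Normal_Form.Determinant"
begin

text \<open>Write \<open>P = G\<^sub>1\<^sub>1 G\<^sub>1\<^sub>1'\<close> and \<open>Q = G\<^sub>1\<^sub>1 G\<^sub>2\<^sub>1'\<close>. Orthogonality of \<open>G\<close> gives
  \<open>G\<^sub>1\<^sub>1'G\<^sub>1\<^sub>1 + G\<^sub>2\<^sub>1'G\<^sub>2\<^sub>1 = I\<close>, from which the two identities \<open>P B\<^sub>h' = Q\<close> and
  \<open>Q B\<^sub>h = I - P\<close> follow; they show \<open>P (I + B\<^sub>h'B\<^sub>h) = I\<close>, so the least squares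
  estimator is \<open>P X\<^sub>1 + Q (X\<^sub>2 - \<alpha>\<^sub>h 1')\<close>. Since \<open>\<alpha>\<^sub>h 1' = n\<^sup>-\<^sup>1 (X\<^sub>2 - B\<^sub>h X\<^sub>1) 1 1'\<close>,
  the identity \<open>Q B\<^sub>h = I - P\<close> turns the intercept correction into the centering of
  \<open>P X\<^sub>1 + Q X\<^sub>2\<close> plus the leftover \<open>n\<^sup>-\<^sup>1 X\<^sub>1 1 1'\<close>.\<close>

lemma carrier_append_cols_mat[simp]:
  "A \<in> carrier_mat m k1 \<Longrightarrow> B \<in> carrier_mat m k2 \<Longrightarrow> append_cols_mat A B \<in> carrier_mat m (k1 + k2)"
  unfolding append_cols_mat_def by auto

lemma append_cols_mat_mult_append_rows:
  assumes A: "A \<in> carrier_mat m k1" and B: "B \<in> carrier_mat m k2"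
    and C: "C \<in> carrier_mat k1 n" and D: "D \<in> carrier_mat k2 n"
  shows "append_cols_mat A B * (C @\<^sub>r D) = A * C + B * D"
proof -
  have "append_cols_mat A B * (C @\<^sub>r D)
      = four_block_mat A B (0\<^sub>m 0 k1) (0\<^sub>m 0 k2) * four_block_mat C (0\<^sub>m k1 0) D (0\<^sub>m k2 0)"
    using A B C D by (simp add: append_rows_def append_cols_mat_def)
  also have "\<dots> = four_block_mat (A * C + B * D) (A * 0\<^sub>m k1 0 + B * 0\<^sub>m k2 0)
      (0\<^sub>m 0 k1 * C + 0\<^sub>m 0 k2 * D) (0\<^sub>m 0 k1 * 0\<^sub>m k1 0 + 0\<^sub>m 0 k2 * 0\<^sub>m k2 0)"
    by (rule mult_four_block_mat[OF A B _ _ C _ D]) auto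
  also have "\<dots> = A * C + B * D"
    using A B C D by (intro eq_matI) auto
  finally show ?thesis .
qed

lemma append_rows_minus:
  assumes "A \<in> carrier_mat n1 k" and "B \<in> carrier_mat n2 k"
    and "C \<in> carrier_mat n1 k" and "D \<in> carrier_mat n2 k"
  shows "(A @\<^sub>r B) - (C @\<^sub>r D) = (A - C) @\<^sub>r (B - D)"
  using assms by (intro eq_matI) (auto simp: append_rows_def)

lemma inv_mat_eqI:
  assumes A: "A \<in> carrier_mat n n" and B: "B \<in> carrier_mat n n"
    and AB: "A * B = 1\<^sub>m n" and BA: "B * A = 1\<^sub>m n"
  shows "inv_mat A = B"
  unfolding inv_mat_def
proof (rule the_equality)
  show "B \<in> carrier_mat (dim_row A) (dim_row A) \<and> A * B = 1\<^sub>m (dim_row A) \<and> B * A = 1\<^sub>m (dim_row A)"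
    using A B AB BA by auto
next
  fix C
  assume "C \<in> carrier_mat (dim_row A) (dim_row A) \<and> A * C = 1\<^sub>m (dim_row A) \<and> C * A = 1\<^sub>m (dim_row A)"
  hence C: "C \<in> carrier_mat n n" and CA: "C * A = 1\<^sub>m n" using A by auto
  have "C = C * (A * B)" using AB C by simp
  also have "\<dots> = (C * A) * B" using C A B by simp
  also have "\<dots> = B" using CA B by simp
  finally show "C = B" .
qed

lemma invertible_mat_obtain_inverse:
  assumes A: "A \<in> carrier_mat n n" and "invertible_mat A"
  obtains B where "B \<in> carrier_mat n n" "A * B = 1\<^sub>m n" "B * A = 1\<^sub>m n"
proof -
  from assms(2) obtain B where AB: "A * B = 1\<^sub>m (dim_row A)" and BA: "B * A = 1\<^sub>m (dim_row B)"
    unfolding invertible_mat_def inverts_mat_def by auto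
  have "dim_col B = n" using AB A by (metis carrier_matD(1) index_mult_mat(3) index_one_mat(3))
  moreover have "dim_row B = n" using BA A by (metis carrier_matD(2) index_mult_mat(3) index_one_mat(3))
  ultimately show ?thesis using that AB BA A by auto
qed

lemma orthogonal_four_block_mat_left_cols:
  assumes A: "A \<in> carrier_mat n1 m1" and B: "B \<in> carrier_mat n1 m2"
    and C: "C \<in> carrier_mat n2 m1" and D: "D \<in> carrier_mat n2 m2"
    and orth: "transpose_mat (four_block_mat A B C D) * four_block_mat A B C D = 1\<^sub>m (m1 + m2)"
  shows "transpose_mat A * A + transpose_mat C * C = 1\<^sub>m m1"
proof -
  let ?T = transpose_mat
  have "four_block_mat (?T A * A + ?T C * C) (?T A * B + ?T C * D) (?T B * A + ?T D * C) (?T B * B + ?T D * D)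
      = ?T (four_block_mat A B C D) * four_block_mat A B C D"
    unfolding transpose_four_block_mat[OF A B C D]
    by (rule mult_four_block_mat[symmetric]) (use A B C D in auto)
  also have "\<dots> = 1\<^sub>m (m1 + m2)" by (fact orth)
  finally have blocks: "four_block_mat (?T A * A + ?T C * C) (?T A * B + ?T C * D)
      (?T B * A + ?T D * C) (?T B * B + ?T D * D) = 1\<^sub>m (m1 + m2)" .
  show ?thesis
  proof (rule eq_matI)
    fix i j assume i: "i < dim_row (1\<^sub>m m1 :: 'a mat)" and j: "j < dim_col (1\<^sub>m m1 :: 'a mat)"
    have "F $$ (i, j) = 1\<^sub>m (m1 + m2) $$ (i, j)" if "F = 1\<^sub>m (m1 + m2)" for F :: "'a mat"
      using that by simp
    from this[OF blocks] show "(?T A * A + ?T C * C) $$ (i, j) = 1\<^sub>m m1 $$ (i, j)"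
      using i j A B C D by simp
  qed (use A C in auto)
qed

lemma gram_mult_transpose_slope:
  fixes A :: "'a :: comm_ring_1 mat"
  assumes A: "A \<in> carrier_mat p p" and Ai: "Ai \<in> carrier_mat p p" and C: "C \<in> carrier_mat r p"
    and AiA: "Ai * A = 1\<^sub>m p"
  shows "A * transpose_mat A * transpose_mat (C * Ai) = A * transpose_mat C"
proof -
  let ?T = transpose_mat
  have "A * ?T A * ?T (C * Ai) = A * (?T A * ?T Ai) * ?T C"
    using A Ai C by (simp add: transpose_mult assoc_mult_mat[of _ p p _ p _ r])
  also have "\<dots> = A * ?T C"
    using A Ai C AiA by (simp flip: transpose_mult)
  finally show ?thesis .
qed

lemma cross_gram_mult_slope:
  fixes A :: "'a :: comm_ring_1 mat"
  assumes A: "A \<in> carrier_mat p p" and Ai: "Ai \<in> carrier_mat p p" and C: "C \<in> carrier_mat r p"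
    and AAi: "A * Ai = 1\<^sub>m p"
    and orth: "transpose_mat A * A + transpose_mat C * C = 1\<^sub>m p"
  shows "A * transpose_mat C * (C * Ai) = 1\<^sub>m p - A * transpose_mat A"
proof -
  have CC: "transpose_mat C * C = 1\<^sub>m p - transpose_mat A * A"
    using A C orth[symmetric] by (intro eq_matI) auto
  have "A * transpose_mat C * (C * Ai) = A * (transpose_mat C * C) * Ai"
    using A Ai C
    by (simp add: assoc_mult_mat[of _ p p _ r _ p] assoc_mult_mat[of _ p p _ p _ p]
        assoc_mult_mat[of _ p r _ p _ p])
  also have "\<dots> = (A - A * transpose_mat A * A) * Ai"
    using A by (simp add: CC mult_minus_distrib_mat[of _ p p _ p])
  also have "\<dots> = A * Ai - A * transpose_mat A * (A * Ai)"
    using A Ai by (simp add: minus_mult_distrib_mat[of _ p p] assoc_mult_mat[of _ p p _ p _ p])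
  also have "\<dots> = 1\<^sub>m p - A * transpose_mat A"
    using A by (simp add: AAi)
  finally show ?thesis .
qed

lemma inv_mat_one_plus_transpose_mult:
  fixes P :: "real mat"
  assumes P: "P \<in> carrier_mat p p" and B: "B \<in> carrier_mat r p"
    and PB: "P * transpose_mat B = Q" and QB: "Q * B = 1\<^sub>m p - P"
  shows "inv_mat (1\<^sub>m p + transpose_mat B * B) = P"
proof -
  let ?M = "1\<^sub>m p + transpose_mat B * B"
  have M: "?M \<in> carrier_mat p p" using B by auto
  have "P * ?M = P + P * transpose_mat B * B"
    using P B by (simp add: mult_add_distrib_mat[of _ p p _ p] assoc_mult_mat[of _ p p _ r _ p])
  also have "\<dots> = 1\<^sub>m p"
    using P by (simp add: PB QB) (intro eq_matI; auto)
  finally have PM: "P * ?M = 1\<^sub>m p" .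
  show ?thesis
    by (rule inv_mat_eqI[OF M P mat_mult_left_right_inverse[OF P M PM] PM])
qed

lemma append_cols_uminus_one_mult_append_rows:
  fixes B :: "real mat"
  assumes B: "B \<in> carrier_mat r p" and Y1: "Y1 \<in> carrier_mat p n" and Y2: "Y2 \<in> carrier_mat r n"
  shows "append_cols_mat (- B) (1\<^sub>m r) * (Y1 @\<^sub>r Y2) = Y2 - B * Y1"
  using B Y1 Y2
  by (simp add: append_cols_mat_mult_append_rows[OF uminus_carrier_mat[OF B] one_carrier_mat Y1 Y2])
    (intro eq_matI; auto)

lemma intercept_correction_centering:
  fixes P :: "'a :: comm_ring_1 mat"
  assumes P: "P \<in> carrier_mat p p" and Q: "Q \<in> carrier_mat p r" and B: "B \<in> carrier_mat r p"
    and X1: "X1 \<in> carrier_mat p n" and X2: "X2 \<in> carrier_mat r n" and J: "J \<in> carrier_mat n n"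
    and QB: "Q * B = 1\<^sub>m p - P"
  shows "P * X1 + Q * (X2 - c \<cdot>\<^sub>m ((X2 - B * X1) * J))
    = c \<cdot>\<^sub>m (X1 * J) + (P * X1 + Q * X2) * (1\<^sub>m n - c \<cdot>\<^sub>m J)"
proof -
  have "Q * (X2 - B * X1) = Q * X2 - (1\<^sub>m p - P) * X1"
    using Q B X1 X2 by (simp add: mult_minus_distrib_mat[of _ p r _ n] flip: QB)
  also have "\<dots> = Q * X2 - X1 + P * X1"
    using P X1 Q X2 by (simp add: minus_mult_distrib_mat[of _ p p]) (intro eq_matI; auto)
  finally have QY: "Q * (X2 - B * X1) = Q * X2 - X1 + P * X1" .
  have Y: "X2 - B * X1 \<in> carrier_mat r n"
    using B X1 by (simp add: minus_carrier_mat)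
  have "Q * (c \<cdot>\<^sub>m ((X2 - B * X1) * J)) = c \<cdot>\<^sub>m ((Q * X2 - X1 + P * X1) * J)"
    using Q Y J by (simp add: mult_smult_distrib[of _ p r _ n] flip: QY)
  also have "(Q * X2 - X1 + P * X1) * J = Q * X2 * J - X1 * J + P * X1 * J"
    using P Q X1 X2 J
    by (simp add: add_mult_distrib_mat[of _ p n] minus_mult_distrib_mat[of _ p n] minus_carrier_mat)
  also have "c \<cdot>\<^sub>m \<dots> = c \<cdot>\<^sub>m (Q * X2 * J) - c \<cdot>\<^sub>m (X1 * J) + c \<cdot>\<^sub>m (P * X1 * J)"
    using P Q X1 X2 J by (intro eq_matI) (auto simp: algebra_simps)
  finally have correction: "Q * (c \<cdot>\<^sub>m ((X2 - B * X1) * J))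
      = c \<cdot>\<^sub>m (Q * X2 * J) - c \<cdot>\<^sub>m (X1 * J) + c \<cdot>\<^sub>m (P * X1 * J)" .
  have centred: "(P * X1 + Q * X2) * (1\<^sub>m n - c \<cdot>\<^sub>m J)
      = P * X1 + Q * X2 - c \<cdot>\<^sub>m (P * X1 * J) - c \<cdot>\<^sub>m (Q * X2 * J)"
  proof -
    have PQ: "P * X1 + Q * X2 \<in> carrier_mat p n" using P Q X1 X2 by simp
    have "(P * X1 + Q * X2) * (c \<cdot>\<^sub>m J) = c \<cdot>\<^sub>m (P * X1 * J + Q * X2 * J)"
      using P Q X1 X2 J by (simp add: mult_smult_distrib[OF PQ J] add_mult_distrib_mat[of _ p n])
    then show ?thesis
      using P Q X1 X2 J
      by (simp add: mult_minus_distrib_mat[OF PQ one_carrier_mat smult_carrier_mat[OF J]])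
        (intro eq_matI; auto simp: algebra_simps)
  qed
  show ?thesis
    using P Q B X1 X2 J
    by (simp add: mult_minus_distrib_mat[OF Q X2 smult_carrier_mat[OF mult_carrier_mat[OF Y J]]]
        correction centred) (intro eq_matI; auto simp: algebra_simps)
qed

lemma intercept_least_squares_fit:
  fixes P :: "real mat"
  assumes X1: "X1 \<in> carrier_mat p n" and X2: "X2 \<in> carrier_mat r n"
    and P: "P \<in> carrier_mat p p" and Q: "Q \<in> carrier_mat p r" and B: "B \<in> carrier_mat r p"
    and PB: "P * transpose_mat B = Q" and QB: "Q * B = 1\<^sub>m p - P"
  shows "P * append_cols_mat (1\<^sub>m p) (transpose_mat B)
      * ((X1 @\<^sub>r X2) - (0\<^sub>m p n @\<^sub>r (append_cols_mat (- B) (1\<^sub>m r)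
          * ((1 / real n) \<cdot>\<^sub>m ((X1 @\<^sub>r X2) * ones_col n)) * ones_row n)))
    = (1 / real n) \<cdot>\<^sub>m (X1 * ones_col n * ones_row n) + (P * X1 + Q * X2) * centering_mat n"
proof -
  define c where "c = 1 / real n"
  define J where "J = ones_col n * ones_row n"
  have o1: "ones_col n \<in> carrier_mat n 1" and o2: "ones_row n \<in> carrier_mat 1 n"
    by (simp_all add: ones_col_def ones_row_def)
  have J: "J \<in> carrier_mat n n" using o1 o2 by (simp add: J_def)
  have X: "X1 @\<^sub>r X2 \<in> carrier_mat (p + r) n" using X1 X2 by auto
  have BI: "append_cols_mat (- B) (1\<^sub>m r) \<in> carrier_mat r (p + r)"
    using B by simp
  have Y: "X2 - B * X1 \<in> carrier_mat r n" using B X1 by (simp add: minus_carrier_mat)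
  define Z where "Z = c \<cdot>\<^sub>m ((X2 - B * X1) * J)"
  have Z: "Z \<in> carrier_mat r n" using Y J by (simp add: Z_def)
  have intercept: "append_cols_mat (- B) (1\<^sub>m r) * (c \<cdot>\<^sub>m ((X1 @\<^sub>r X2) * ones_col n)) * ones_row n = Z"
  proof -
    have "append_cols_mat (- B) (1\<^sub>m r) * ((X1 @\<^sub>r X2) * ones_col n) = (X2 - B * X1) * ones_col n"
      using BI X o1 by (simp add: append_cols_uminus_one_mult_append_rows[OF B X1 X2]
          flip: assoc_mult_mat[of _ r "p + r" _ n _ 1])
    then show ?thesis
      using BI X o1 o2 Y
      by (simp add: Z_def J_def mult_smult_distrib[of _ r "p + r" _ 1] mult_smult_assoc_mat[of _ r 1]
          assoc_mult_mat[of _ r n _ 1 _ n])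
  qed
  have residual: "(X1 @\<^sub>r X2) - (0\<^sub>m p n @\<^sub>r Z) = X1 @\<^sub>r (X2 - Z)"
  proof -
    have "X1 - 0\<^sub>m p n = X1" using X1 by (intro eq_matI) auto
    then show ?thesis by (simp add: append_rows_minus[OF X1 X2 zero_carrier_mat Z])
  qed
  have fit: "P * append_cols_mat (1\<^sub>m p) (transpose_mat B) * (X1 @\<^sub>r (X2 - Z)) = P * X1 + Q * (X2 - Z)"
  proof -
    have YZ: "X2 - Z \<in> carrier_mat r n" using Z by (simp add: minus_carrier_mat)
    have I: "append_cols_mat (1\<^sub>m p) (transpose_mat B) \<in> carrier_mat p (p + r)"
      using B by simp
    have "P * append_cols_mat (1\<^sub>m p) (transpose_mat B) * (X1 @\<^sub>r (X2 - Z))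
        = P * (append_cols_mat (1\<^sub>m p) (transpose_mat B) * (X1 @\<^sub>r (X2 - Z)))"
      using I X1 YZ by (intro assoc_mult_mat[OF P]) auto
    also have "\<dots> = P * (X1 + transpose_mat B * (X2 - Z))"
      using X1 by (simp add: append_cols_mat_mult_append_rows[of _ p p _ r] B YZ)
    also have "\<dots> = P * X1 + P * transpose_mat B * (X2 - Z)"
      using P B X1 YZ by (simp add: mult_add_distrib_mat[of _ p p])
    finally show ?thesis by (simp only: PB)
  qed
  have "X1 * ones_col n * ones_row n = X1 * J"
    using X1 o1 o2 by (simp add: J_def)
  moreover have "centering_mat n = 1\<^sub>m n - c \<cdot>\<^sub>m J"
    by (simp add: centering_mat_def c_def J_def)
  moreover have "P * X1 + Q * (X2 - Z) = c \<cdot>\<^sub>m (X1 * J) + (P * X1 + Q * X2) * (1\<^sub>m n - c \<cdot>\<^sub>m J)"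
    unfolding Z_def by (rule intercept_correction_centering[OF P Q B X1 X2 J QB])
  ultimately show ?thesis
    by (simp only: c_def[symmetric] intercept residual fit)
qed

theorem mainTheorem1:
  fixes p r n :: nat
    and X1 X2 G11 G12 G21 G22 D :: "real mat"
  assumes X1: "X1 \<in> carrier_mat p n"
    and X2: "X2 \<in> carrier_mat r n"
    and G11: "G11 \<in> carrier_mat p p"
    and G12: "G12 \<in> carrier_mat p r"
    and G21: "G21 \<in> carrier_mat r p"
    and G22: "G22 \<in> carrier_mat r r"
    and D: "D \<in> carrier_mat (p + r) (p + r)"
    and D_diag: "diagonal_mat D"
    and D_ord: "\<forall>i j. i \<le> j \<and> j < p + r \<longrightarrow> D $$ (j, j) \<le> D $$ (i, i)"
    and G_orth1: "transpose_mat (four_block_mat G11 G12 G21 G22) * four_block_mat G11 G12 G21 G22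
                    = 1\<^sub>m (p + r)"
    and G_orth2: "four_block_mat G11 G12 G21 G22 * transpose_mat (four_block_mat G11 G12 G21 G22)
                    = 1\<^sub>m (p + r)"
    and W_eig: "(X1 @\<^sub>r X2) * centering_mat n * transpose_mat (X1 @\<^sub>r X2)
                 = four_block_mat G11 G12 G21 G22 * D * transpose_mat (four_block_mat G11 G12 G21 G22)"
    and G11_inv: "invertible_mat G11"
  shows
    "let X = X1 @\<^sub>r X2;
         xbar = (1 / real n) \<cdot>\<^sub>m (X * ones_col n);
         Bh = G21 * inv_mat G11;
         alphah = append_cols_mat (- Bh) (1\<^sub>m r) * xbar;
         U1h = inv_mat (1\<^sub>m p + transpose_mat Bh * Bh) * append_cols_mat (1\<^sub>m p) (transpose_mat Bh)
               * (X - (0\<^sub>m p n @\<^sub>r (alphah * ones_row n)))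
     in U1h = (1 / real n) \<cdot>\<^sub>m (X1 * ones_col n * ones_row n)
              + (G11 * transpose_mat G11 * X1 + G11 * transpose_mat G21 * X2) * centering_mat n"
proof -
  obtain Gi where Gi: "Gi \<in> carrier_mat p p" and G11Gi: "G11 * Gi = 1\<^sub>m p" and GiG11: "Gi * G11 = 1\<^sub>m p"
    using invertible_mat_obtain_inverse[OF G11 G11_inv] .
  have inv_G11: "inv_mat G11 = Gi" by (rule inv_mat_eqI[OF G11 Gi G11Gi GiG11])
  define Bh where "Bh = G21 * Gi"
  have Bh: "Bh \<in> carrier_mat r p" using G21 Gi by (simp add: Bh_def)
  have orth: "transpose_mat G11 * G11 + transpose_mat G21 * G21 = 1\<^sub>m p"
    by (rule orthogonal_four_block_mat_left_cols[OF G11 G12 G21 G22 G_orth1])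
  have PB: "G11 * transpose_mat G11 * transpose_mat Bh = G11 * transpose_mat G21"
    unfolding Bh_def by (rule gram_mult_transpose_slope[OF G11 Gi G21 GiG11])
  have QB: "G11 * transpose_mat G21 * Bh = 1\<^sub>m p - G11 * transpose_mat G11"
    unfolding Bh_def by (rule cross_gram_mult_slope[OF G11 Gi G21 G11Gi orth])
  have "inv_mat (1\<^sub>m p + transpose_mat Bh * Bh) = G11 * transpose_mat G11"
    using G11 by (intro inv_mat_one_plus_transpose_mult[OF _ Bh PB QB]) simp
  then show ?thesis
    unfolding Let_def inv_G11 Bh_def[symmetric]
    using G11 G21 by (simp add: intercept_least_squares_fit[OF X1 X2 _ _ Bh PB QB])
qed

end
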